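(* For $n\ge 1$, the symmetric double star $D_n$ satisfies $\nu^*(D_n)=10n^2+10n+3$.
   Context: For a finite simple graph $G=(V,E)$ with $\ell=|V|+|E|$, a construction sequence (c-sequence) is a bijection $x:\{1,\dots,\ell\}\to V\sqcup E$ such that every edge $e=uw$ satisfies $x^{-1}(e)>\max\{x^{-1}(u),x^{-1}(w)\}$. The cost of $x$ is $\nu(x)=\sum_{e=uw\in E}\big(2x^{-1}(e)-x^{-1}(u)-x^{-1}(w)\big)$, and $\nu^*(G)$ is the maximum of $\nu(x)$ over all c-sequences for $G$. The symmetric double star $D_n$ is the graph formed from two disjoint copies of the star $K_{1,n}$ by adding an edge joining their two hubs. *)

theory Defs
  imports Main
begin

text \<open>The elements of V \<squnion> E are
represented in the sum type: Inl v for a vertex, Inr e for an edge.\<close>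

definition simple_graph :: "'a set \<Rightarrow> 'a set set \<Rightarrow> bool" where
  "simple_graph V E \<longleftrightarrow> finite V \<and> (\<forall>e\<in>E. e \<subseteq> V \<and> card e = 2)"

definition glen :: "'a set \<Rightarrow> 'a set set \<Rightarrow> nat" where
  "glen V E = card V + card E"

definition pos :: "'a set \<Rightarrow> 'a set set \<Rightarrow> (nat \<Rightarrow> 'a + 'a set) \<Rightarrow> ('a + 'a set) \<Rightarrow> nat" where
  "pos V E x z = inv_into {1..glen V E} x z"

definition cseq :: "'a set \<Rightarrow> 'a set set \<Rightarrow> (nat \<Rightarrow> 'a + 'a set) \<Rightarrow> bool" where
  "cseq V E x \<longleftrightarrow>
     bij_betw x {1..glen V E} (Inl ` V \<union> Inr ` E) \<and>
     (\<forall>e\<in>E. \<forall>v\<in>e. pos V E x (Inr e) > pos V E x (Inl v))"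

definition cost :: "'a set \<Rightarrow> 'a set set \<Rightarrow> (nat \<Rightarrow> 'a + 'a set) \<Rightarrow> int" where
  "cost V E x = (\<Sum>e\<in>E. 2 * int (pos V E x (Inr e)) - (\<Sum>v\<in>e. int (pos V E x (Inl v))))"

definition nu_star :: "'a set \<Rightarrow> 'a set set \<Rightarrow> int" where
  "nu_star V E = Max (cost V E ` {x. cseq V E x})"

text \<open>Symmetric double star D_n: two copies (indexed by a bool) of the star K_{1,n}
with hub (b, None) and leaves (b, Some i), i = 1..n, plus the edge joining the hubs.\<close>
definition dstar_V :: "nat \<Rightarrow> (bool \<times> nat option) set" where
  "dstar_V n = {(b, None) | b. True} \<union> {(b, Some i) | b i. i \<in> {1..n}}"

definition dstar_E :: "nat \<Rightarrow> (bool \<times> nat option) set set" where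
  "dstar_E n = {{(b, None), (b, Some i)} | b i. i \<in> {1..n}} \<union> {{(False, None), (True, None)}}"

end

theory Submission
  imports Defs "HOL-Library.FuncSet"
begin

text \<open>Since the positions of the \<open>\<ell>\<close> elements of V \<squnion> E are exactly 1, ..., \<open>\<ell>\<close>, summing the
  edge terms gives \<open>\<nu>(x) = \<ell>(\<ell>+1) - \<Sum>\<^sub>v (deg v + 2) x\<inverse>(v)\<close>: only the vertex positions matter.
  For D_n, with \<open>\<ell> = 4n+3\<close>, this is \<open>\<ell>(\<ell>+1) - 3 \<Sum>\<^sub>v x\<inverse>(v) - n (x\<inverse>(h\<^sub>1) + x\<inverse>(h\<^sub>2))\<close>.
  The vertex positions are distinct, so they sum to at least 1 + ... + (2n+2), and the two
  hub positions sum to at least 3. Both bounds are attained by listing the two hubs, then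
  the leaves, then the edges.\<close>

lemma simple_graph_finite_edges: "simple_graph V E \<Longrightarrow> finite E"
  unfolding simple_graph_def by (meson PowI finite_Pow_iff finite_subset subsetI)

definition degree :: "'a set set \<Rightarrow> 'a \<Rightarrow> nat" where
  "degree E v = card {e \<in> E. v \<in> e}"

lemma sum_endpoints_eq_sum_degree:
  assumes "simple_graph V E"
  shows "(\<Sum>e\<in>E. \<Sum>v\<in>e. f v) = (\<Sum>v\<in>V. of_nat (degree E v) * (f v :: 'b :: comm_semiring_1))"
proof -
  have fin: "finite V" "finite E"
    using assms simple_graph_finite_edges unfolding simple_graph_def by auto
  have "(\<Sum>e\<in>E. \<Sum>v\<in>e. f v) = (\<Sum>e\<in>E. \<Sum>v\<in>{v \<in> V. v \<in> e}. f v)"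
    using assms unfolding simple_graph_def by (intro sum.cong) auto
  also have "\<dots> = (\<Sum>v\<in>V. \<Sum>e\<in>{e \<in> E. v \<in> e}. f v)"
    using fin by (intro sum.swap_restrict) auto
  also have "\<dots> = (\<Sum>v\<in>V. of_nat (degree E v) * f v)"
    by (simp add: degree_def)
  finally show ?thesis .
qed

lemma bij_betw_pos:
  assumes "bij_betw x {1..glen V E} (Inl ` V \<union> Inr ` E)"
  shows "bij_betw (pos V E x) (Inl ` V \<union> Inr ` E) {1..glen V E}"
  unfolding pos_def using assms by (rule bij_betw_inv_into)

lemma cost_eq_degree_weighted_sum:
  assumes G: "simple_graph V E" and x: "bij_betw x {1..glen V E} (Inl ` V \<union> Inr ` E)"
  shows "cost V E x = int (glen V E) * (int (glen V E) + 1)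
           - (\<Sum>v\<in>V. (int (degree E v) + 2) * int (pos V E x (Inl v)))"
proof -
  let ?l = "glen V E" and ?p = "\<lambda>z. int (pos V E x z)"
  have fin: "finite V" "finite E"
    using G simple_graph_finite_edges unfolding simple_graph_def by auto
  have "(\<Sum>z\<in>Inl ` V \<union> Inr ` E. ?p z) = (\<Sum>k\<in>{1..?l}. int k)"
    using sum.reindex_bij_betw[OF bij_betw_pos[OF x], of int] .
  moreover have "(\<Sum>z\<in>Inl ` V \<union> Inr ` E. ?p z) = (\<Sum>v\<in>V. ?p (Inl v)) + (\<Sum>e\<in>E. ?p (Inr e))"
    using fin by (subst sum.union_disjoint) (auto simp: sum.reindex)
  ultimately have total: "2 * ((\<Sum>v\<in>V. ?p (Inl v)) + (\<Sum>e\<in>E. ?p (Inr e))) = int ?l * (int ?l + 1)"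
    using double_gauss_sum_from_Suc_0[of ?l] by simp
  have "cost V E x = 2 * (\<Sum>e\<in>E. ?p (Inr e)) - (\<Sum>e\<in>E. \<Sum>v\<in>e. ?p (Inl v))"
    unfolding cost_def by (simp add: sum_subtractf sum_distrib_left)
  also have "(\<Sum>e\<in>E. \<Sum>v\<in>e. ?p (Inl v)) = (\<Sum>v\<in>V. int (degree E v) * ?p (Inl v))"
    using G by (rule sum_endpoints_eq_sum_degree)
  finally show ?thesis
    using total by (simp add: algebra_simps sum.distrib sum_distrib_left)
qed

lemma pos_restrict: "pos V E (restrict x {1..glen V E}) = pos V E x"
  unfolding pos_def inv_into_def by (intro ext arg_cong[where f = Eps]) auto

lemma finite_cost_image_cseq:
  assumes "finite V" "finite E"
  shows "finite (cost V E ` {x. cseq V E x})"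
proof -
  let ?I = "Inl ` V \<union> Inr ` E"
  have "cost V E ` {x. cseq V E x} \<subseteq> cost V E ` ({1..glen V E} \<rightarrow>\<^sub>E ?I)"
  proof
    fix c assume "c \<in> cost V E ` {x. cseq V E x}"
    then obtain x where x: "cseq V E x" and c: "c = cost V E x" by blast
    have "restrict x {1..glen V E} \<in> {1..glen V E} \<rightarrow>\<^sub>E ?I"
      using x unfolding cseq_def bij_betw_def by auto
    moreover have "cost V E (restrict x {1..glen V E}) = c"
      unfolding c cost_def pos_restrict ..
    ultimately show "c \<in> cost V E ` ({1..glen V E} \<rightarrow>\<^sub>E ?I)" by blast
  qed
  moreover have "finite ({1..glen V E} \<rightarrow>\<^sub>E ?I)"
    using assms by (intro finite_PiE) auto
  ultimately show ?thesis by (meson finite_imageI finite_subset)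
qed

lemma nu_star_eqI:
  assumes "simple_graph V E" "cseq V E x" "cost V E x = c"
    and "\<And>y. cseq V E y \<Longrightarrow> cost V E y \<le> c"
  shows "nu_star V E = c"
  unfolding nu_star_def
proof (rule Max_eqI)
  show "finite (cost V E ` {x. cseq V E x})"
    using assms(1) simple_graph_finite_edges unfolding simple_graph_def
    by (intro finite_cost_image_cseq) auto
qed (use assms in auto)

lemma cseq_from_vertex_order:
  assumes G: "simple_graph V E" and f: "bij_betw f V {1..card V}"
  obtains x where "cseq V E x" "\<And>v. v \<in> V \<Longrightarrow> pos V E x (Inl v) = f v"
proof -
  let ?I = "Inl ` V \<union> Inr ` E" and ?l = "glen V E"
  have "card {card V + 1..?l} = card E"
    by (simp add: glen_def)
  then obtain g where g: "bij_betw g E {card V + 1..?l}"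
    using finite_same_card_bij[OF simple_graph_finite_edges[OF G] finite_atLeastAtMost] by metis
  define p where "p = case_sum f g"
  have "bij_betw p (Inl ` V) {1..card V}" "bij_betw p (Inr ` E) {card V + 1..?l}"
    using f g unfolding p_def bij_betw_def inj_on_def by (auto simp: image_image)
  then have "bij_betw p ?I ({1..card V} \<union> {card V + 1..?l})"
    by (rule bij_betw_combine) auto
  moreover have "{1..card V} \<union> {card V + 1..?l} = {1..?l}"
    by (auto simp: glen_def)
  ultimately have p: "bij_betw p ?I {1..?l}" by simp
  define x where "x = inv_into ?I p"
  have pos_x: "pos V E x z = p z" if "z \<in> ?I" for z
    unfolding pos_def x_def using p that by (rule inv_into_inv_into_eq)
  have "cseq V E x"
    unfolding cseq_def
  proof (intro conjI ballI)
    show "bij_betw x {1..?l} ?I"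
      unfolding x_def using p by (rule bij_betw_inv_into)
  next
    fix e v assume e: "e \<in> E" and "v \<in> e"
    then have v: "v \<in> V" using G unfolding simple_graph_def by auto
    have "f v \<le> card V" using bij_betw_apply[OF f v] by simp
    also have "card V < g e" using bij_betw_apply[OF g e] by simp
    finally show "pos V E x (Inr e) > pos V E x (Inl v)"
      using e v by (simp add: pos_x p_def)
  qed
  moreover have "pos V E x (Inl v) = f v" if "v \<in> V" for v
    using that by (simp add: pos_x p_def)
  ultimately show ?thesis by (rule that)
qed

lemma gauss_sum_card_le_sum:
  fixes B :: "nat set"
  assumes "finite B" "0 \<notin> B"
  shows "\<Sum>{1..card B} \<le> \<Sum>B"
  using assms
proof (induction B rule: finite_linorder_max_induct)
  case empty
  then show ?case by simp
next
  case (insert b A)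
  have "A \<subseteq> {1..<b}"
    using insert.hyps(2) insert.prems by (auto simp: Suc_le_eq intro: gr0I)
  then have "card A + 1 \<le> b"
    using card_mono[of "{1..<b}" A] insert.prems by (cases b) auto
  moreover have "b \<notin> A"
    using insert.hyps(2) by auto
  ultimately show ?case
    using insert by simp
qed

abbreviation hub :: "bool \<Rightarrow> bool \<times> nat option" where
  "hub b \<equiv> (b, None)"

lemma dstar_V_eq: "dstar_V n = UNIV \<times> insert None (Some ` {1..n})"
  unfolding dstar_V_def by auto

lemma dstar_E_eq:
  "dstar_E n = insert {hub False, hub True} ((\<lambda>(b, i). {hub b, (b, Some i)}) ` (UNIV \<times> {1..n}))"
proof -
  have "{{hub b, (b, Some i)} | b i. i \<in> {1..n}} = (\<lambda>(b, i). {hub b, (b, Some i)}) ` (UNIV \<times> {1..n})"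
  proof (intro set_eqI iffI)
    fix e assume "e \<in> {{hub b, (b, Some i)} | b i. i \<in> {1..n}}"
    then obtain b i where "e = {hub b, (b, Some i)}" "i \<in> {1..n}" by blast
    then show "e \<in> (\<lambda>(b, i). {hub b, (b, Some i)}) ` (UNIV \<times> {1..n})"
      by (intro image_eqI[where x = "(b, i)"]) auto
  next
    fix e assume "e \<in> (\<lambda>(b, i). {hub b, (b, Some i)}) ` (UNIV \<times> {1..n})"
    then obtain b i where "e = {hub b, (b, Some i)}" "i \<in> {1..n}" by (elim imageE SigmaE) simp
    then show "e \<in> {{hub b, (b, Some i)} | b i. i \<in> {1..n}}" by blast
  qed
  then show ?thesis
    unfolding dstar_E_def by (simp only: Un_insert_right Un_empty_right)
qed

lemma card_dstar_V: "card (dstar_V n) = 2 * n + 2"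
  by (simp add: dstar_V_eq card_cartesian_product card_image)

lemma card_dstar_E: "card (dstar_E n) = 2 * n + 1"
proof -
  have "inj_on (\<lambda>(b, i). {hub b, (b, Some i)}) (UNIV \<times> {1..n})"
    by (auto simp: inj_on_def doubleton_eq_iff)
  then show ?thesis
    by (auto simp: dstar_E_eq card_insert_if card_image card_cartesian_product doubleton_eq_iff)
qed

lemma glen_dstar: "glen (dstar_V n) (dstar_E n) = 4 * n + 3"
  by (simp add: glen_def card_dstar_V card_dstar_E)

lemma simple_graph_dstar: "simple_graph (dstar_V n) (dstar_E n)"
  unfolding simple_graph_def dstar_V_eq dstar_E_eq by auto

lemma dstar_edges_at_hub:
  "{e \<in> dstar_E n. hub b \<in> e} = insert {hub False, hub True} ((\<lambda>i. {hub b, (b, Some i)}) ` {1..n})"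
proof (intro set_eqI iffI)
  fix e assume "e \<in> {e \<in> dstar_E n. hub b \<in> e}"
  then have "e \<in> dstar_E n" and b: "hub b \<in> e" by auto
  then consider "e = {hub False, hub True}" | c i where "i \<in> {1..n}" "e = {hub c, (c, Some i)}"
    unfolding dstar_E_eq by blast
  then show "e \<in> insert {hub False, hub True} ((\<lambda>i. {hub b, (b, Some i)}) ` {1..n})"
  proof cases
    case (2 c i)
    with b have "c = b" by auto
    with 2 show ?thesis by blast
  qed simp
next
  fix e assume "e \<in> insert {hub False, hub True} ((\<lambda>i. {hub b, (b, Some i)}) ` {1..n})"
  then show "e \<in> {e \<in> dstar_E n. hub b \<in> e}"
    unfolding dstar_E_eq by (cases b) auto
qed

lemma dstar_edges_at_leaf:
  assumes "i \<in> {1..n}"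
  shows "{e \<in> dstar_E n. (b, Some i) \<in> e} = {{hub b, (b, Some i)}}"
proof (intro set_eqI iffI)
  fix e assume "e \<in> {e \<in> dstar_E n. (b, Some i) \<in> e}"
  then have "e \<in> dstar_E n" and b: "(b, Some i) \<in> e" by auto
  then consider "e = {hub False, hub True}" | c j where "j \<in> {1..n}" "e = {hub c, (c, Some j)}"
    unfolding dstar_E_eq by blast
  then show "e \<in> {{hub b, (b, Some i)}}"
  proof cases
    case (2 c j)
    with b have "c = b" "j = i" by auto
    with 2 show ?thesis by blast
  qed (use b in auto)
next
  fix e assume "e \<in> {{hub b, (b, Some i)}}"
  moreover have "{hub b, (b, Some i)} \<in> dstar_E n"
    unfolding dstar_E_eq using assms by (intro insertI2 image_eqI[where x = "(b, i)"]) auto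
  ultimately show "e \<in> {e \<in> dstar_E n. (b, Some i) \<in> e}"
    by simp
qed

lemma degree_dstar_hub: "degree (dstar_E n) (hub b) = n + 1"
proof -
  have "inj_on (\<lambda>i. {hub b, (b, Some i)}) {1..n}"
    by (auto simp: inj_on_def doubleton_eq_iff)
  then show ?thesis
    by (auto simp: degree_def dstar_edges_at_hub card_insert_if card_image doubleton_eq_iff)
qed

lemma degree_dstar_leaf: "i \<in> {1..n} \<Longrightarrow> degree (dstar_E n) (b, Some i) = 1"
  by (simp add: degree_def dstar_edges_at_leaf)

lemma dstar_cost:
  fixes n :: nat
  defines "V \<equiv> dstar_V n" and "E \<equiv> dstar_E n"
  assumes x: "bij_betw x {1..glen V E} (Inl ` V \<union> Inr ` E)"
  shows "cost V E x = (4 * int n + 3) * (4 * int n + 4) - 3 * (\<Sum>v\<in>V. int (pos V E x (Inl v)))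
           - int n * (int (pos V E x (Inl (hub False))) + int (pos V E x (Inl (hub True))))"
proof -
  let ?p = "\<lambda>v. int (pos V E x (Inl v))"
  have hubs: "{v \<in> V. snd v = None} = {hub False, hub True}"
    by (auto simp: V_def dstar_V_eq)
  have "finite V"
    by (simp add: V_def dstar_V_eq)
  have "(\<Sum>v\<in>V. (int (degree E v) + 2) * ?p v)
      = (\<Sum>v\<in>V. 3 * ?p v) + (\<Sum>v\<in>V. if snd v = None then int n * ?p v else 0)"
    unfolding sum.distrib[symmetric]
    by (intro sum.cong) (auto simp: V_def E_def dstar_V_eq degree_dstar_hub degree_dstar_leaf algebra_simps)
  also have "(\<Sum>v\<in>V. if snd v = None then int n * ?p v else 0) = (\<Sum>v\<in>{v \<in> V. snd v = None}. int n * ?p v)"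
    using \<open>finite V\<close> by (simp add: sum.inter_filter)
  also have "\<dots> = int n * (?p (hub False) + ?p (hub True))"
    by (simp add: hubs algebra_simps)
  finally show ?thesis
    using cost_eq_degree_weighted_sum[OF simple_graph_dstar x[unfolded V_def E_def]]
    by (simp add: V_def E_def glen_dstar sum_distrib_left algebra_simps)
qed

lemma dstar_cost_le:
  fixes n :: nat
  defines "V \<equiv> dstar_V n" and "E \<equiv> dstar_E n"
  assumes x: "bij_betw x {1..glen V E} (Inl ` V \<union> Inr ` E)"
  shows "cost V E x \<le> 10 * int n ^ 2 + 10 * int n + 3"
proof -
  let ?p = "\<lambda>v. pos V E x (Inl v)"
  have p: "bij_betw (pos V E x) (Inl ` V \<union> Inr ` E) {1..4 * n + 3}"
    using bij_betw_pos[OF x] by (simp add: V_def E_def glen_dstar)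
  then have inj: "inj_on ?p V"
    unfolding bij_betw_def inj_on_def by blast
  have p_bounds: "?p v \<in> {1..4 * n + 3}" if "v \<in> V" for v
    using bij_betw_apply[OF p] that by blast
  have "finite V"
    by (simp add: V_def dstar_V_eq)
  moreover have "0 \<notin> ?p ` V"
    using p_bounds by fastforce
  ultimately have "\<Sum>{1..card (?p ` V)} \<le> \<Sum>(?p ` V)"
    by (intro gauss_sum_card_le_sum) auto
  then have "\<Sum>{1..2 * n + 2} \<le> (\<Sum>v\<in>V. ?p v)"
    using card_dstar_V[of n] by (simp add: card_image[OF inj] sum.reindex[OF inj] flip: V_def)
  then have "(2 * n + 2) * (2 * n + 3) \<le> 2 * (\<Sum>v\<in>V. ?p v)"
    using double_gauss_sum_from_Suc_0[of "2 * n + 2", where 'a = nat] by (simp add: algebra_simps)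
  then have "int ((2 * n + 2) * (2 * n + 3)) \<le> int (2 * (\<Sum>v\<in>V. ?p v))"
    by (simp only: of_nat_le_iff)
  then have vertex_sum: "4 * int n ^ 2 + 10 * int n + 6 \<le> 2 * (\<Sum>v\<in>V. int (?p v))"
    by (simp add: algebra_simps power2_eq_square)
  have hubs: "hub False \<in> V" "hub True \<in> V"
    by (auto simp: V_def dstar_V_eq)
  have "?p (hub False) \<noteq> ?p (hub True)"
    using inj_onD[OF inj _ hubs] by auto
  then have "3 \<le> int (?p (hub False)) + int (?p (hub True))"
    using p_bounds[OF hubs(1)] p_bounds[OF hubs(2)] by auto
  then have hub_sum: "int n * 3 \<le> int n * (int (?p (hub False)) + int (?p (hub True)))"
    by (intro mult_left_mono) auto
  have "(4 * int n + 3) * (4 * int n + 4) = 16 * int n ^ 2 + 28 * int n + 12"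
    by (simp add: algebra_simps power2_eq_square)
  then show ?thesis
    using dstar_cost[OF x[unfolded V_def E_def]] vertex_sum hub_sum unfolding V_def E_def
    by linarith
qed

definition dstar_vertex_order :: "nat \<Rightarrow> bool \<times> nat option \<Rightarrow> nat" where
  "dstar_vertex_order n v =
     (case v of (b, None) \<Rightarrow> if b then 2 else 1 | (b, Some i) \<Rightarrow> if b then n + 2 + i else 2 + i)"

lemma bij_betw_dstar_vertex_order:
  "bij_betw (dstar_vertex_order n) (dstar_V n) {1..card (dstar_V n)}"
proof -
  have inj: "inj_on (dstar_vertex_order n) (dstar_V n)"
    by (auto simp: inj_on_def dstar_V_eq dstar_vertex_order_def split: if_splits)
  moreover have "dstar_vertex_order n ` dstar_V n \<subseteq> {1..2 * n + 2}"
    by (auto simp: dstar_V_eq dstar_vertex_order_def)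
  ultimately have "dstar_vertex_order n ` dstar_V n = {1..2 * n + 2}"
    by (intro card_subset_eq) (auto simp: card_image card_dstar_V)
  with inj show ?thesis
    by (simp add: bij_betw_def card_dstar_V)
qed

lemma dstar_cost_vertex_order:
  fixes n :: nat
  defines "V \<equiv> dstar_V n" and "E \<equiv> dstar_E n"
  assumes x: "cseq V E x" and order: "\<And>v. v \<in> V \<Longrightarrow> pos V E x (Inl v) = dstar_vertex_order n v"
  shows "cost V E x = 10 * int n ^ 2 + 10 * int n + 3"
proof -
  have "(\<Sum>v\<in>V. int (pos V E x (Inl v))) = (\<Sum>k=1..2 * n + 2. int k)"
    using sum.reindex_bij_betw[OF bij_betw_dstar_vertex_order, of int n] order
    by (simp add: V_def card_dstar_V)
  moreover have "2 * (\<Sum>k=1..2 * n + 2. int k) = (2 * int n + 2) * (2 * int n + 3)"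
    using double_gauss_sum_from_Suc_0[of "2 * n + 2", where 'a = int] by (simp add: algebra_simps)
  moreover have "hub False \<in> V" "hub True \<in> V"
    by (auto simp: V_def dstar_V_eq)
  ultimately show ?thesis
    using dstar_cost[of x n] x order unfolding cseq_def V_def E_def
    by (simp add: dstar_vertex_order_def algebra_simps power2_eq_square)
qed

theorem theorem6:
  fixes n :: nat
  assumes "n \<ge> 1"
  shows "nu_star (dstar_V n) (dstar_E n) = 10 * int n ^ 2 + 10 * int n + 3"
proof -
  obtain x where "cseq (dstar_V n) (dstar_E n) x"
    and "\<And>v. v \<in> dstar_V n \<Longrightarrow> pos (dstar_V n) (dstar_E n) x (Inl v) = dstar_vertex_order n v"
    using cseq_from_vertex_order[OF simple_graph_dstar[of n] bij_betw_dstar_vertex_order[of n]] by blast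
  then show ?thesis
    by (intro nu_star_eqI[OF simple_graph_dstar] dstar_cost_vertex_order dstar_cost_le)
      (auto simp: cseq_def)
qed

end
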